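(* Let $\Pi$ be a PTS such that, from every state $(\ell,\mathbf v)\in\mathcal S$, the induced process terminates almost surely, i.e. $\Pr[\exists n.\ \hat\ell_n\in\{\ell_t,\ell_f\}]=1$. Let $1\le M<\infty$. Then the greatest and least fixed points of $\mathsf{ptf}^M$ on $(\mathcal K^M,\sqsubseteq)$ coincide, so $\mathsf{ptf}^M$ has a unique fixed point in $\mathcal K^M$, and this fixed point is $\mathrm{vpf}$.
   Context: A probabilistic transition system (PTS) $\Pi$ consists of: a finite set $V$ of program variables (valuations $\mathbf v\in\mathbb R^V$); a finite set $R$ of sampling variables, each $r\in R$ with a probability distribution $\mathcal D(r)$ on $\mathbb R$; a finite set $L$ of locations containing two distinct terminal locations $\ell_t$ (normal termination) and $\ell_f$ (assertion violation); and a finite set of transitions $\tau=\langle\ell^{\mathrm{src}},\varphi,F_1,\dots,F_k\rangle$ with $\ell^{\mathrm{src}}\in L\setminus\{\ell_t,\ell_f\}$, a guard predicate $\varphi$, and forks $F_j=\langle\ell^{\mathrm{dst}}_j,p_j,\mathrm{upd}_j\rangle$ where $\ell^{\mathrm{dst}}_j\in L$, $p_j>0$, $\sum_jp_j=1$, $\mathrm{upd}_j:\mathbb R^V\times\mathbb R^R\to\mathbb R^V$ measurable. For every non-terminal $\ell$ and every $\mathbf v$ exactly one transition has $\ell^{\mathrm{src}}=\ell$ and $\mathbf v\models\varphi$ (the enabled transition). The state space is $\mathcal S=L\times\mathbb R^V$. The process started at a state $\sigma$ is $\hat\sigma_n=(\hat\ell_n,\hat{\mathbf v}_n)$ with $\hat\sigma_0=\sigma$;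 if $\hat\ell_n\notin\{\ell_t,\ell_f\}$, take the enabled transition at $\hat\sigma_n$, choose fork $j$ with probability $p_j$, draw $\hat{\mathbf u}_n\in\mathbb R^R$ with independent coordinates $\hat{\mathbf u}_n[r]\sim\mathcal D(r)$ (independent across steps), and set $\hat\sigma_{n+1}=(\ell^{\mathrm{dst}}_j,\mathrm{upd}_j(\hat{\mathbf v}_n,\hat{\mathbf u}_n))$; terminal locations are absorbing. The violation probability function is $\mathrm{vpf}(\ell,\mathbf v)=\Pr[\exists n.\ \hat\ell_n=\ell_f]$ for the process started at $(\ell,\mathbf v)$. For $M\in[1,\infty)$, $\mathcal K^M$ is the set of functions $f:\mathcal S\to[0,M]$ with $f(\ell_t,\mathbf v)=0$, $f(\ell_f,\mathbf v)=1$ for all $\mathbf v$, ordered pointwise. $\mathsf{ptf}^M:\mathcal K^M\to\mathcal K^M$: $\mathsf{ptf}^M(f)(\ell_f,\mathbf v)=1$, $\mathsf{ptf}^M(f)(\ell_t,\mathbf v)=0$, and for non-terminal $\ell$ whose enabled transition at $\mathbf v$ has forks $F_1,\dots,F_k$, $\mathsf{ptf}^M(f)(\ell,\mathbf v)=\sum_jp_j\mathbb E_{\mathbf r}[f(\ell^{\mathrm{dst}}_j,\mathrm{upd}_j(\mathbf v,\mathbf r))]$ with $\mathbf r$ having independent coordinates $\mathbf r[r]\sim\mathcal D(r)$. *)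

theory Defs
  imports "HOL-Probability.Probability"
begin

text \<open>
  Sampling variables: a finite type 'r, sample
  vectors are functions 'r \<Rightarrow> real; D r is the distribution of sampling
  variable r.  A fork is a triple (destination, probability, update); a
  transition is a triple (source, guard, list of forks); T is the finite set of
  transitions.  lt and lf are the terminal locations.
\<close>

type_synonym ('v,'r) upd = "('v \<Rightarrow> real) \<Rightarrow> ('r \<Rightarrow> real) \<Rightarrow> ('v \<Rightarrow> real)"
type_synonym ('l,'v,'r) fork = "'l \<times> real \<times> ('v,'r) upd"
type_synonym ('l,'v,'r) trans = "'l \<times> ('v \<Rightarrow> real) set \<times> ('l,'v,'r) fork list"

definition val_space :: "('v \<Rightarrow> real) measure" where
  "val_space = PiM UNIV (\<lambda>_. borel)"

definition sample_measure :: "('r \<Rightarrow> real measure) \<Rightarrow> ('r \<Rightarrow> real) measure" where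
  "sample_measure D = PiM UNIV D"

definition wf_pts ::
  "'l \<Rightarrow> 'l \<Rightarrow> ('r::finite \<Rightarrow> real measure) \<Rightarrow> ('l::finite,'v::finite,'r) trans set \<Rightarrow> bool" where
  "wf_pts lt lf D T \<longleftrightarrow>
     lt \<noteq> lf \<and> finite T \<and>
     (\<forall>r. prob_space (D r) \<and> sets (D r) = sets borel) \<and>
     (\<forall>(src, g, fs) \<in> T.
        src \<noteq> lt \<and> src \<noteq> lf \<and>
        g \<in> sets val_space \<and>
        fs \<noteq> [] \<and>
        (\<forall>(d, p, u) \<in> set fs. p > 0 \<and>
            case_prod u \<in> val_space \<Otimes>\<^sub>M sample_measure D \<rightarrow>\<^sub>M val_space) \<and>
        sum_list (map (\<lambda>(d, p, u). p) fs) = 1) \<and>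
     (\<forall>l v. l \<noteq> lt \<and> l \<noteq> lf \<longrightarrow> (\<exists>!t. t \<in> T \<and> fst t = l \<and> v \<in> fst (snd t)))"

definition enabled_forks :: "('l,'v,'r) trans set \<Rightarrow> 'l \<Rightarrow> ('v \<Rightarrow> real) \<Rightarrow> ('l,'v,'r) fork list" where
  "enabled_forks T l v = (THE fs. \<exists>g. (l, g, fs) \<in> T \<and> v \<in> g)"

text \<open>Fork selection from a uniform variable x in [0,1): fork j is selected iff
  x lies in [p_1+...+p_(j-1), p_1+...+p_j), which has probability p_j.\<close>
definition select_fork :: "('l,'v,'r) fork list \<Rightarrow> real \<Rightarrow> nat" where
  "select_fork fs x =
     (if \<exists>j < length fs. x < sum_list (map (\<lambda>(d, p, u). p) (take (Suc j) fs))
      then LEAST j. j < length fs \<and> x < sum_list (map (\<lambda>(d, p, u). p) (take (Suc j) fs))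
      else length fs - 1)"

definition pts_step ::
  "'l \<Rightarrow> 'l \<Rightarrow> ('l,'v,'r) trans set \<Rightarrow> 'l \<times> ('v \<Rightarrow> real) \<Rightarrow> real \<times> ('r \<Rightarrow> real)
     \<Rightarrow> 'l \<times> ('v \<Rightarrow> real)" where
  "pts_step lt lf T \<sigma> inp =
     (case \<sigma> of (l, v) \<Rightarrow>
       (if l = lt \<or> l = lf then (l, v)
        else (case enabled_forks T l v ! select_fork (enabled_forks T l v) (fst inp) of
                (d, p, u) \<Rightarrow> (d, u v (snd inp)))))"

definition input_space :: "('r \<Rightarrow> real measure) \<Rightarrow> (nat \<Rightarrow> real \<times> ('r \<Rightarrow> real)) measure" where
  "input_space D = PiM UNIV (\<lambda>_. uniform_measure lborel {0..<1} \<Otimes>\<^sub>M sample_measure D)"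

primrec pts_run ::
  "'l \<Rightarrow> 'l \<Rightarrow> ('l,'v,'r) trans set \<Rightarrow> 'l \<times> ('v \<Rightarrow> real) \<Rightarrow> (nat \<Rightarrow> real \<times> ('r \<Rightarrow> real))
     \<Rightarrow> nat \<Rightarrow> 'l \<times> ('v \<Rightarrow> real)" where
  "pts_run lt lf T \<sigma> \<omega> 0 = \<sigma>"
| "pts_run lt lf T \<sigma> \<omega> (Suc n) = pts_step lt lf T (pts_run lt lf T \<sigma> \<omega> n) (\<omega> n)"

definition ast :: "'l \<Rightarrow> 'l \<Rightarrow> ('r \<Rightarrow> real measure) \<Rightarrow> ('l,'v,'r) trans set \<Rightarrow> bool" where
  "ast lt lf D T \<longleftrightarrow>
     (\<forall>\<sigma>. \<P>(\<omega> in input_space D. \<exists>n. fst (pts_run lt lf T \<sigma> \<omega> n) \<in> {lt, lf}) = 1)"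

definition vpf :: "'l \<Rightarrow> 'l \<Rightarrow> ('r \<Rightarrow> real measure) \<Rightarrow> ('l,'v,'r) trans set
     \<Rightarrow> 'l \<times> ('v \<Rightarrow> real) \<Rightarrow> real" where
  "vpf lt lf D T \<sigma> = \<P>(\<omega> in input_space D. \<exists>n. fst (pts_run lt lf T \<sigma> \<omega> n) = lf)"

definition KM :: "'l \<Rightarrow> 'l \<Rightarrow> real \<Rightarrow> ('l \<times> ('v \<Rightarrow> real) \<Rightarrow> real) set" where
  "KM lt lf M = {f. (\<forall>\<sigma>. 0 \<le> f \<sigma> \<and> f \<sigma> \<le> M) \<and> (\<forall>v. f (lt, v) = 0 \<and> f (lf, v) = 1)}"

text \<open>The predicate transformer; expectations are (lower) nonnegative Lebesgue
  integrals, which are finite since f is bounded.\<close>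
definition ptf :: "'l \<Rightarrow> 'l \<Rightarrow> ('r \<Rightarrow> real measure) \<Rightarrow> ('l,'v,'r) trans set
     \<Rightarrow> ('l \<times> ('v \<Rightarrow> real) \<Rightarrow> real) \<Rightarrow> ('l \<times> ('v \<Rightarrow> real) \<Rightarrow> real)" where
  "ptf lt lf D T f \<sigma> =
     (case \<sigma> of (l, v) \<Rightarrow>
       if l = lf then 1 else if l = lt then 0
       else sum_list (map (\<lambda>(d, p, u).
              p * enn2real (\<integral>\<^sup>+ r. ennreal (f (d, u v r)) \<partial>sample_measure D))
            (enabled_forks T l v)))"

definition is_gfp_on :: "('a \<Rightarrow> real) set \<Rightarrow> (('a \<Rightarrow> real) \<Rightarrow> ('a \<Rightarrow> real)) \<Rightarrow> ('a \<Rightarrow> real) \<Rightarrow> bool" where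
  "is_gfp_on K F f \<longleftrightarrow> f \<in> K \<and> F f = f \<and> (\<forall>g\<in>K. F g = g \<longrightarrow> g \<le> f)"

definition is_lfp_on :: "('a \<Rightarrow> real) set \<Rightarrow> (('a \<Rightarrow> real) \<Rightarrow> ('a \<Rightarrow> real)) \<Rightarrow> ('a \<Rightarrow> real) \<Rightarrow> bool" where
  "is_lfp_on K F f \<longleftrightarrow> f \<in> K \<and> F f = f \<and> (\<forall>g\<in>K. F g = g \<longrightarrow> f \<le> g)"

end

theory Submission
  imports Defs
begin

text \<open>
  For a function h on states, the n-th iterate of ptf applied to h is the expected value of h
  at the n-th state of the run; this follows by induction from the Markov property of the
  i.i.d. input sequence. For the least element of K^M (the indicator of lf) it is the
  probability of being in lf after n steps, for the greatest element it is that probability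
  plus M times the probability of still running after n steps. As ptf is monotone, every fixed
  point in K^M lies between these two iterates; so does vpf, and hence also ptf vpf.
  Almost-sure termination makes the gap, M times the probability of still running after n steps,
  tend to 0. Therefore vpf is the unique fixed point of ptf in K^M, and in particular both its
  greatest and its least fixed point.
\<close>

section \<open>Fixed points squeezed between iterates\<close>

lemma eq_if_sandwiched:
  fixes a b :: real
  assumes "\<And>n. lo n \<le> a \<and> a \<le> hi n" "\<And>n. lo n \<le> b \<and> b \<le> hi n"
    and "(\<lambda>n. hi n - lo n) \<longlonglongrightarrow> 0"
  shows "a = b"
proof -
  have "\<bar>a - b\<bar> \<le> hi n - lo n" for n using assms(1,2)[of n] by linarith
  then have "\<bar>a - b\<bar> \<le> 0" by (intro LIMSEQ_le_const[OF assms(3)]) auto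
  then show ?thesis by simp
qed

lemma unique_fixed_point_by_iteration:
  fixes F :: "('a \<Rightarrow> real) \<Rightarrow> 'a \<Rightarrow> real"
  assumes mono: "\<And>f g. f \<le> g \<Longrightarrow> g \<in> K \<Longrightarrow> F f \<le> F g"
    and closed: "\<And>f. f \<in> K \<Longrightarrow> F f \<in> K"
    and least: "\<And>f. f \<in> K \<Longrightarrow> least \<le> f"
    and greatest: "greatest \<in> K" "\<And>f. f \<in> K \<Longrightarrow> f \<le> greatest"
    and gap: "\<And>x. (\<lambda>n. (F ^^ n) greatest x - (F ^^ n) least x) \<longlonglongrightarrow> 0"
    and v: "v \<in> K" "\<And>n. (F ^^ n) least \<le> v" "\<And>n. v \<le> (F ^^ n) greatest"
  shows "F v = v" and "f \<in> K \<Longrightarrow> F f = f \<Longrightarrow> f = v"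
proof -
  have iter_K: "(F ^^ n) f \<in> K" if "f \<in> K" for f n
    by (induction n) (simp_all add: that closed)
  have F_between: "(F ^^ Suc n) least \<le> F f" "F f \<le> (F ^^ Suc n) greatest"
    if "f \<in> K" "(F ^^ n) least \<le> f" "f \<le> (F ^^ n) greatest" for f n
    using mono[OF that(2,1)] mono[OF that(3) iter_K[OF greatest(1)]] by simp_all
  have eq_if_between: "g = v" if "\<And>n. (F ^^ n) least \<le> g \<and> g \<le> (F ^^ n) greatest" for g
  proof
    fix x
    show "g x = v x"
      by (rule eq_if_sandwiched[OF _ _ gap]) (use that v(2,3) in \<open>auto simp: le_fun_def\<close>)
  qed
  have "(F ^^ n) least \<le> F v \<and> F v \<le> (F ^^ n) greatest" for n
  proof (cases n)
    case 0
    then show ?thesis using least greatest(2) closed[OF v(1)] by simp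
  next
    case (Suc m)
    then show ?thesis using F_between[OF v(1) v(2,3)[of m]] by simp
  qed
  then show "F v = v" by (rule eq_if_between)
  assume f: "f \<in> K" "F f = f"
  have "(F ^^ n) least \<le> f \<and> f \<le> (F ^^ n) greatest" for n
  proof (induction n)
    case 0
    show ?case using least greatest(2) f(1) by simp
  next
    case (Suc n)
    then show ?case using F_between[OF f(1)] f(2) by simp
  qed
  then show "f = v" by (rule eq_if_between)
qed

lemma unique_fixed_point_is_gfp_and_lfp:
  assumes "v \<in> K" "F v = v" and unique: "\<And>f. f \<in> K \<Longrightarrow> F f = f \<Longrightarrow> f = v"
  shows "is_gfp_on K F v" "is_lfp_on K F v"
    "\<forall>f g. is_gfp_on K F f \<longrightarrow> is_lfp_on K F g \<longrightarrow> f = g"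
  using assms(1,2) by (auto simp: is_gfp_on_def is_lfp_on_def dest: unique)

lemma (in prob_space) nn_integral_PiM_case_nat:
  assumes [measurable]: "f \<in> borel_measurable (\<Pi>\<^sub>M i\<in>UNIV. M)"
  shows "(\<integral>\<^sup>+ \<omega>. f \<omega> \<partial>(\<Pi>\<^sub>M i\<in>UNIV. M)) = (\<integral>\<^sup>+ s. \<integral>\<^sup>+ \<omega>. f (case_nat s \<omega>) \<partial>(\<Pi>\<^sub>M i\<in>UNIV. M) \<partial>M)"
proof -
  interpret S: sequence_space M ..
  interpret S': prob_space "\<Pi>\<^sub>M i\<in>UNIV. M" by (intro prob_space_PiM prob_space_axioms)
  have "(\<integral>\<^sup>+ \<omega>. f \<omega> \<partial>(\<Pi>\<^sub>M i\<in>UNIV. M)) = (\<integral>\<^sup>+ x. f (case_prod case_nat x) \<partial>(M \<Otimes>\<^sub>M S.S))"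
    by (subst S.PiM_iter[symmetric]) (simp add: nn_integral_distr)
  also have "\<dots> = (\<integral>\<^sup>+ s. \<integral>\<^sup>+ \<omega>. f (case_nat s \<omega>) \<partial>S.S \<partial>M)"
    using S'.nn_integral_fst[of "\<lambda>x. f (case_prod case_nat x)"] by simp
  finally show ?thesis .
qed

lemma nn_integral_ennreal_le_const:
  assumes "prob_space M" "\<And>x. f x \<le> c"
  shows "(\<integral>\<^sup>+ x. ennreal (f x) \<partial>M) \<le> ennreal c"
proof -
  have "(\<integral>\<^sup>+ x. ennreal (f x) \<partial>M) \<le> (\<integral>\<^sup>+ x. ennreal c \<partial>M)"
    using assms(2) by (intro nn_integral_mono ennreal_leI)
  then show ?thesis using prob_space.emeasure_space_1[OF assms(1)] by simp
qed

section \<open>Fork selection\<close>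

definition valid_forks :: "('l,'v,'r) fork list \<Rightarrow> bool" where
  "valid_forks fs \<longleftrightarrow> fs \<noteq> [] \<and> (\<forall>(d, p, u) \<in> set fs. 0 < p) \<and> sum_list (map (\<lambda>(d, p, u). p) fs) = 1"

lemma valid_forks_prob_pos: "valid_forks fs \<Longrightarrow> j < length fs \<Longrightarrow> 0 < fst (snd (fs ! j))"
  using nth_mem[of j fs] by (auto simp: valid_forks_def case_prod_beta')

definition fork_cumprob :: "('l,'v,'r) fork list \<Rightarrow> nat \<Rightarrow> real" where
  "fork_cumprob fs j = sum_list (map (\<lambda>(d, p, u). p) (take j fs))"

lemma select_fork_eq:
  "select_fork fs x = (if \<exists>j < length fs. x < fork_cumprob fs (Suc j)
     then LEAST j. j < length fs \<and> x < fork_cumprob fs (Suc j) else length fs - 1)"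
  unfolding select_fork_def fork_cumprob_def ..

lemma measurable_select_fork [measurable]: "select_fork fs \<in> borel \<rightarrow>\<^sub>M count_space UNIV"
proof -
  have "Measurable.pred borel (\<lambda>x. j < length fs \<and> x < fork_cumprob fs (Suc j))" for j
    by measurable
  then show ?thesis
    unfolding select_fork_eq[abs_def] by (intro measurable_If measurable_Least) auto
qed

lemma select_fork_less:
  assumes "fs \<noteq> []"
  shows "select_fork fs x < length fs"
proof (cases "\<exists>j < length fs. x < fork_cumprob fs (Suc j)")
  case True
  then show ?thesis
    unfolding select_fork_eq using LeastI_ex[OF True] by simp
next
  case False
  then have "select_fork fs x = length fs - 1"
    unfolding select_fork_eq by (rule if_not_P)
  with assms show ?thesis by simp
qed

lemma fork_cumprob_Suc:
  "j < length fs \<Longrightarrow> fork_cumprob fs (Suc j) = fork_cumprob fs j + fst (snd (fs ! j))"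
  by (simp add: fork_cumprob_def take_Suc_conv_app_nth case_prod_beta)

lemma fork_cumprob_mono:
  assumes "valid_forks fs" "i \<le> j"
  shows "fork_cumprob fs i \<le> fork_cumprob fs j"
proof -
  have "take j fs = take i fs @ take (j - i) (drop i fs)"
    using assms(2) by (metis le_add_diff_inverse take_add)
  moreover have "0 \<le> sum_list (map (\<lambda>(d, p, u). p) (take (j - i) (drop i fs)))"
    using assms(1) by (intro sum_list_nonneg)
      (auto simp: valid_forks_def dest!: in_set_takeD in_set_dropD intro: less_imp_le)
  ultimately show ?thesis by (simp add: fork_cumprob_def)
qed

lemma select_fork_interval:
  assumes "valid_forks fs" "0 \<le> x" "x < 1"
  shows "fork_cumprob fs (select_fork fs x) \<le> x \<and> x < fork_cumprob fs (Suc (select_fork fs x))"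
proof -
  let ?P = "\<lambda>j. j < length fs \<and> x < fork_cumprob fs (Suc j)"
  have "?P (length fs - 1)"
    using assms by (simp add: valid_forks_def fork_cumprob_def)
  then have ex: "\<exists>j. ?P j" and k: "select_fork fs x = (LEAST j. ?P j)"
    by (auto simp: select_fork_eq)
  have "fork_cumprob fs (LEAST j. ?P j) \<le> x"
  proof (cases "LEAST j. ?P j")
    case 0
    then show ?thesis using assms(2) by (simp add: fork_cumprob_def)
  next
    case (Suc i)
    then have "\<not> ?P i" using not_less_Least[of i ?P] by simp
    moreover have "i < length fs" using LeastI_ex[OF ex] Suc by simp
    ultimately show ?thesis using Suc by simp
  qed
  then show ?thesis using LeastI_ex[OF ex] k by simp
qed

lemma select_fork_eq_iff:
  assumes "valid_forks fs" "0 \<le> x" "x < 1" "j < length fs"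
  shows "select_fork fs x = j \<longleftrightarrow> fork_cumprob fs j \<le> x \<and> x < fork_cumprob fs (Suc j)"
proof
  assume j: "fork_cumprob fs j \<le> x \<and> x < fork_cumprob fs (Suc j)"
  define k where "k = select_fork fs x"
  have k: "fork_cumprob fs k \<le> x \<and> x < fork_cumprob fs (Suc k)"
    unfolding k_def using assms(1-3) by (rule select_fork_interval)
  have "\<not> k < j" using fork_cumprob_mono[OF assms(1), of "Suc k" j] j k by linarith
  moreover have "\<not> j < k" using fork_cumprob_mono[OF assms(1), of "Suc j" k] j k by linarith
  ultimately show "select_fork fs x = j" unfolding k_def by simp
qed (use select_fork_interval[OF assms(1-3)] in blast)

lemma emeasure_select_fork:
  assumes "valid_forks fs" "j < length fs"
  shows "emeasure (uniform_measure lborel {0..<1}) {x. select_fork fs x = j} = ennreal (fst (snd (fs ! j)))"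
proof -
  have "0 \<le> fork_cumprob fs j"
    using fork_cumprob_mono[OF assms(1), of 0 j] by (simp add: fork_cumprob_def)
  moreover have "fork_cumprob fs (Suc j) \<le> 1"
    using fork_cumprob_mono[OF assms(1), of "Suc j" "length fs"] assms
    by (simp add: valid_forks_def fork_cumprob_def)
  ultimately have "x \<in> {0..<1} \<inter> {x. select_fork fs x = j} \<longleftrightarrow>
      x \<in> {fork_cumprob fs j..<fork_cumprob fs (Suc j)}" for x
    using select_fork_eq_iff[OF assms(1) _ _ assms(2), of x] by (cases "0 \<le> x \<and> x < 1") auto
  then have "{0..<1} \<inter> {x. select_fork fs x = j} = {fork_cumprob fs j..<fork_cumprob fs (Suc j)}"
    by blast
  then show ?thesis
    using fork_cumprob_Suc[OF assms(2)] fork_cumprob_mono[OF assms(1), of j "Suc j"]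
    by (simp add: emeasure_uniform_measure divide_ennreal_def)
qed

lemma nn_integral_select_fork:
  assumes "valid_forks fs"
  shows "(\<integral>\<^sup>+ x. F (select_fork fs x) \<partial>uniform_measure lborel {0..<1})
    = (\<Sum>j<length fs. ennreal (fst (snd (fs ! j))) * F j)"
proof -
  have "F (select_fork fs x) = (\<Sum>j<length fs. F j * indicator {x. select_fork fs x = j} x)" for x
  proof -
    have "select_fork fs x < length fs"
      using assms by (simp add: valid_forks_def select_fork_less)
    then show ?thesis by (simp add: indicator_def sum.delta' if_distrib[of "(*) _"] cong: if_cong)
  qed
  then have "(\<integral>\<^sup>+ x. F (select_fork fs x) \<partial>uniform_measure lborel {0..<1})
    = (\<Sum>j<length fs. \<integral>\<^sup>+ x. F j * indicator {x. select_fork fs x = j} x \<partial>uniform_measure lborel {0..<1})"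
    by (simp only:) (rule nn_integral_sum, simp)
  also have "\<dots> = (\<Sum>j<length fs. F j * ennreal (fst (snd (fs ! j))))"
    using emeasure_select_fork[OF assms]
    by (intro sum.cong refl) (simp add: nn_integral_cmult_indicator del: emeasure_uniform_measure)
  finally show ?thesis by (simp add: mult.commute)
qed

lemma pts_step_terminal: "fst \<sigma> \<in> {lt, lf} \<Longrightarrow> pts_step lt lf T \<sigma> s = \<sigma>"
  by (cases \<sigma>) (auto simp: pts_step_def)

lemma pts_run_terminal: "fst \<sigma> \<in> {lt, lf} \<Longrightarrow> pts_run lt lf T \<sigma> \<omega> n = \<sigma>"
  by (induction n) (simp_all add: pts_step_terminal)

lemma pts_run_absorbing:
  assumes "fst (pts_run lt lf T \<sigma> \<omega> m) \<in> {lt, lf}" "m \<le> n"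
  shows "pts_run lt lf T \<sigma> \<omega> n = pts_run lt lf T \<sigma> \<omega> m"
proof -
  obtain k where "n = m + k" using assms(2) le_Suc_ex by blast
  then show ?thesis by (induction k arbitrary: n) (simp_all add: pts_step_terminal[OF assms(1)])
qed

lemma pts_run_Suc_case_nat:
  "pts_run lt lf T \<sigma> (case_nat s \<omega>) (Suc n) = pts_run lt lf T (pts_step lt lf T \<sigma> s) \<omega> n"
  by (induction n) simp_all

definition fork_step :: "('l,'v,'r) fork list \<Rightarrow> ('v \<Rightarrow> real) \<Rightarrow> real \<times> ('r \<Rightarrow> real) \<Rightarrow> 'l \<times> ('v \<Rightarrow> real)" where
  "fork_step fs v s = (case fs ! select_fork fs (fst s) of (d, p, u) \<Rightarrow> (d, u v (snd s)))"

lemma pts_step_nonterminal: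
  "l \<notin> {lt, lf} \<Longrightarrow> pts_step lt lf T (l, v) s = fork_step (enabled_forks T l v) v s"
  by (simp add: pts_step_def fork_step_def)

abbreviation state_space :: "('l \<times> ('v \<Rightarrow> real)) measure" where
  "state_space \<equiv> count_space UNIV \<Otimes>\<^sub>M val_space"

abbreviation step_input :: "('r \<Rightarrow> real measure) \<Rightarrow> (real \<times> ('r \<Rightarrow> real)) measure" where
  "step_input D \<equiv> uniform_measure lborel {0..<1} \<Otimes>\<^sub>M sample_measure D"

lemma space_val_space [simp]: "space val_space = UNIV"
  by (simp add: val_space_def space_PiM)

lemma KM_bounds: "f \<in> KM lt lf M \<Longrightarrow> 0 \<le> f \<sigma> \<and> f \<sigma> \<le> M"
  unfolding KM_def by blast

definition KM_bot :: "'l \<Rightarrow> 'l \<times> ('v \<Rightarrow> real) \<Rightarrow> real" where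
  "KM_bot lf \<sigma> = (if fst \<sigma> = lf then 1 else 0)"

definition KM_top :: "'l \<Rightarrow> 'l \<Rightarrow> real \<Rightarrow> 'l \<times> ('v \<Rightarrow> real) \<Rightarrow> real" where
  "KM_top lt lf M \<sigma> = (if fst \<sigma> = lf then 1 else if fst \<sigma> = lt then 0 else M)"

lemma KM_bot_in_KM: "lt \<noteq> lf \<Longrightarrow> 1 \<le> M \<Longrightarrow> KM_bot lf \<in> KM lt lf M"
  by (simp add: KM_def KM_bot_def)

lemma KM_top_in_KM: "lt \<noteq> lf \<Longrightarrow> 1 \<le> M \<Longrightarrow> KM_top lt lf M \<in> KM lt lf M"
  by (simp add: KM_def KM_top_def)

lemma KM_bot_le: "f \<in> KM lt lf M \<Longrightarrow> KM_bot lf \<le> f"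
  by (auto simp: KM_def KM_bot_def le_fun_def)

lemma le_KM_top: "f \<in> KM lt lf M \<Longrightarrow> f \<le> KM_top lt lf M"
  by (auto simp: KM_def KM_top_def le_fun_def)

lemma measurable_KM_bot: "KM_bot lf \<in> borel_measurable state_space"
  unfolding KM_bot_def[abs_def] by measurable

lemma measurable_KM_top: "KM_top lt lf M \<in> borel_measurable state_space"
  unfolding KM_top_def[abs_def] by measurable

locale pts =
  fixes lt lf :: "'l::finite" and D :: "'r::finite \<Rightarrow> real measure"
    and T :: "('l,'v::finite,'r) trans set"
  assumes wf: "wf_pts lt lf D T"
begin

lemma lt_neq_lf: "lt \<noteq> lf"
  using wf by (simp add: wf_pts_def)

lemma transition_source: "(l, g, fs) \<in> T \<Longrightarrow> l \<notin> {lt, lf}"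
  using wf unfolding wf_pts_def by fast

lemma transition_guard: "(l, g, fs) \<in> T \<Longrightarrow> g \<in> sets val_space"
  using wf unfolding wf_pts_def by fast

lemma transition_valid_forks: "(l, g, fs) \<in> T \<Longrightarrow> valid_forks fs"
  using wf unfolding wf_pts_def valid_forks_def by fast

lemma transition_update_measurable:
  "(l, g, fs) \<in> T \<Longrightarrow> (d, p, u) \<in> set fs \<Longrightarrow> case_prod u \<in> val_space \<Otimes>\<^sub>M sample_measure D \<rightarrow>\<^sub>M val_space"
  using wf unfolding wf_pts_def by fast

lemma enabled_forks_eq:
  assumes t: "(l, g, fs) \<in> T" and "v \<in> g"
  shows "enabled_forks T l v = fs"
  unfolding enabled_forks_def
proof (rule the_equality)
  show "\<exists>g. (l, g, fs) \<in> T \<and> v \<in> g" using assms by blast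
  have "\<exists>!t. t \<in> T \<and> fst t = l \<and> v \<in> fst (snd t)"
    using wf transition_source[OF t] unfolding wf_pts_def by blast
  then show "fs' = fs" if "\<exists>g. (l, g, fs') \<in> T \<and> v \<in> g" for fs'
    using that assms by force
qed

lemma enabled_transition:
  assumes "l \<notin> {lt, lf}"
  shows "\<exists>g. (l, g, enabled_forks T l v) \<in> T \<and> v \<in> g"
proof -
  obtain t where "t \<in> T" "fst t = l" "v \<in> fst (snd t)"
    using wf assms unfolding wf_pts_def by blast
  then show ?thesis using enabled_forks_eq by (cases t) auto
qed

lemma valid_enabled_forks: "l \<notin> {lt, lf} \<Longrightarrow> valid_forks (enabled_forks T l v)"
  using enabled_transition transition_valid_forks by blast

lemma prob_space_sample_measure: "prob_space (sample_measure D)"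
  using wf unfolding sample_measure_def wf_pts_def by (auto intro: prob_space_PiM)

lemma prob_space_step_input: "prob_space (step_input D)"
proof -
  interpret U: prob_space "uniform_measure lborel {0..<1::real}"
    by (intro prob_space_uniform_measure) auto
  interpret S: prob_space "sample_measure D" by (rule prob_space_sample_measure)
  interpret pair_prob_space "uniform_measure lborel {0..<1::real}" "sample_measure D" ..
  show ?thesis by (rule P.prob_space_axioms)
qed

lemma prob_space_input_space: "prob_space (input_space D)"
  unfolding input_space_def using prob_space_step_input by (auto intro: prob_space_PiM)

lemma measurable_fork_step:
  assumes "(l, g, fs) \<in> T"
  shows "(\<lambda>(v, s). fork_step fs v s) \<in> val_space \<Otimes>\<^sub>M step_input D \<rightarrow>\<^sub>M state_space"
proof -
  have "fs \<noteq> []" using transition_valid_forks[OF assms] by (simp add: valid_forks_def)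
  moreover have "(\<lambda>(v, s). select_fork fs (fst s))
      \<in> val_space \<Otimes>\<^sub>M step_input D \<rightarrow>\<^sub>M count_space UNIV"
    by measurable
  ultimately have select: "(\<lambda>(v, s). select_fork fs (fst s))
      \<in> val_space \<Otimes>\<^sub>M step_input D \<rightarrow>\<^sub>M count_space {..<length fs}"
    unfolding measurable_count_space_eq2_countable
    by (auto simp: select_fork_less intro: measurable_sets)
  have "(\<lambda>(v, s). case fs ! j of (d, p, u) \<Rightarrow> (d, u v (snd s)))
      \<in> val_space \<Otimes>\<^sub>M step_input D \<rightarrow>\<^sub>M state_space" if "j < length fs" for j
  proof -
    obtain d p u where j: "fs ! j = (d, p, u)" by (cases "fs ! j")
    have u: "case_prod u \<in> val_space \<Otimes>\<^sub>M sample_measure D \<rightarrow>\<^sub>M val_space"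
      using transition_update_measurable[OF assms] nth_mem[OF that] j by simp
    have "(\<lambda>(v, s). (v, snd s)) \<in> val_space \<Otimes>\<^sub>M step_input D \<rightarrow>\<^sub>M val_space \<Otimes>\<^sub>M sample_measure D"
      by measurable
    from measurable_compose[OF this u]
    have "(\<lambda>(v, s). u v (snd s)) \<in> val_space \<Otimes>\<^sub>M step_input D \<rightarrow>\<^sub>M val_space"
      by (simp add: case_prod_beta')
    then show ?thesis
      unfolding j using measurable_Pair[OF measurable_const[of d "count_space UNIV"]]
      by (simp add: case_prod_beta')
  qed
  from measurable_compose_countable'[OF this select]
  show ?thesis by (simp add: fork_step_def case_prod_beta')
qed

lemma finite_transitions: "finite T"
  using wf by (simp add: wf_pts_def)

lemma finite_forks_from: "finite {fs. \<exists>g. (l, g, fs) \<in> T}"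
  by (rule finite_subset[OF _ finite_imageI[OF finite_transitions, of "\<lambda>t. snd (snd t)"]]) force

lemma measurable_enabled_forks:
  assumes "l \<notin> {lt, lf}"
  shows "enabled_forks T l \<in> val_space \<rightarrow>\<^sub>M count_space {fs. \<exists>g. (l, g, fs) \<in> T}"
proof -
  have preimage: "enabled_forks T l -` {fs} = \<Union>{g. (l, g, fs) \<in> T}" for fs
  proof (intro set_eqI iffI)
    fix v assume "v \<in> enabled_forks T l -` {fs}"
    then show "v \<in> \<Union>{g. (l, g, fs) \<in> T}" using enabled_transition[OF assms, of v] by auto
  next
    fix v assume "v \<in> \<Union>{g. (l, g, fs) \<in> T}"
    then show "v \<in> enabled_forks T l -` {fs}" using enabled_forks_eq by auto
  qed
  have "\<Union>{g. (l, g, fs) \<in> T} \<in> sets val_space" for fs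
  proof (rule sets.finite_Union)
    show "finite {g. (l, g, fs) \<in> T}"
      by (rule finite_subset[OF _ finite_imageI[OF finite_transitions, of "\<lambda>t. fst (snd t)"]]) force
  qed (auto intro: transition_guard)
  moreover have "enabled_forks T l v \<in> {fs. \<exists>g. (l, g, fs) \<in> T}" for v
    using enabled_transition[OF assms] by blast
  ultimately show ?thesis
    unfolding measurable_count_space_eq2[OF finite_forks_from] preimage by simp
qed

lemma measurable_pts_step_at:
  "(\<lambda>(v, s). pts_step lt lf T (l, v) s) \<in> val_space \<Otimes>\<^sub>M step_input D \<rightarrow>\<^sub>M state_space"
proof (cases "l \<in> {lt, lf}")
  case True
  then show ?thesis by (simp add: pts_step_terminal case_prod_beta')
next
  case False
  have "(\<lambda>z. (\<lambda>fs. \<lambda>(v, s). fork_step fs v s) (enabled_forks T l (fst z)) z)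
      \<in> val_space \<Otimes>\<^sub>M step_input D \<rightarrow>\<^sub>M state_space"
  proof (rule measurable_compose_countable'[OF _ _ countable_finite[OF finite_forks_from]])
    show "(\<lambda>z. enabled_forks T l (fst z))
        \<in> val_space \<Otimes>\<^sub>M step_input D \<rightarrow>\<^sub>M count_space {fs. \<exists>g. (l, g, fs) \<in> T}"
      using measurable_enabled_forks[OF False] by measurable
  qed (auto intro: measurable_fork_step)
  then show ?thesis using False by (simp add: pts_step_nonterminal case_prod_beta')
qed

lemma measurable_pts_step:
  "(\<lambda>(\<sigma>, s). pts_step lt lf T \<sigma> s) \<in> state_space \<Otimes>\<^sub>M step_input D \<rightarrow>\<^sub>M state_space"
proof -
  have step: "(\<lambda>(l, v, s). pts_step lt lf T (l, v) s)
      \<in> count_space UNIV \<Otimes>\<^sub>M (val_space \<Otimes>\<^sub>M step_input D) \<rightarrow>\<^sub>M state_space"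
    using measurable_pts_step_at by (intro measurable_pair_measure_countable1) (simp_all add: case_prod_beta')
  have "(\<lambda>z. (fst (fst z), snd (fst z), snd z))
      \<in> state_space \<Otimes>\<^sub>M step_input D \<rightarrow>\<^sub>M count_space UNIV \<Otimes>\<^sub>M (val_space \<Otimes>\<^sub>M step_input D)"
    by measurable
  from measurable_compose[OF this step] show ?thesis
    by (simp add: case_prod_beta')
qed

lemma measurable_pts_run:
  "(\<lambda>(\<sigma>, \<omega>). pts_run lt lf T \<sigma> \<omega> n) \<in> state_space \<Otimes>\<^sub>M input_space D \<rightarrow>\<^sub>M state_space"
proof (induction n)
  case (Suc n)
  have "(\<lambda>(\<sigma>, \<omega>). (pts_run lt lf T \<sigma> \<omega> n, \<omega> n))
      \<in> state_space \<Otimes>\<^sub>M input_space D \<rightarrow>\<^sub>M state_space \<Otimes>\<^sub>M step_input D"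
    using Suc unfolding input_space_def by measurable
  from measurable_compose[OF this measurable_pts_step] show ?case
    by (simp add: case_prod_beta')
qed (simp add: case_prod_beta')

lemma measurable_pts_run_from [measurable]:
  "(\<lambda>\<omega>. pts_run lt lf T \<sigma> \<omega> n) \<in> input_space D \<rightarrow>\<^sub>M state_space"
  using measurable_compose[OF measurable_Pair1'[of \<sigma> state_space] measurable_pts_run]
  by (simp add: space_pair_measure)

lemma nn_integral_pts_run_Suc:
  assumes [measurable]: "f \<in> borel_measurable state_space"
  shows "(\<integral>\<^sup>+ \<omega>. f (pts_run lt lf T \<sigma> \<omega> (Suc n)) \<partial>input_space D)
    = (\<integral>\<^sup>+ s. \<integral>\<^sup>+ \<omega>. f (pts_run lt lf T (pts_step lt lf T \<sigma> s) \<omega> n) \<partial>input_space D \<partial>step_input D)"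
proof -
  have "(\<lambda>\<omega>. f (pts_run lt lf T \<sigma> \<omega> (Suc n))) \<in> borel_measurable (\<Pi>\<^sub>M i\<in>UNIV. step_input D)"
    using measurable_pts_run_from[of \<sigma> "Suc n"] unfolding input_space_def by measurable
  from prob_space.nn_integral_PiM_case_nat[OF prob_space_step_input this]
  show ?thesis unfolding input_space_def by (simp only: pts_run_Suc_case_nat)
qed

lemma nn_integral_fork_step:
  assumes "(l, g, fs) \<in> T" and [measurable]: "G \<in> borel_measurable state_space"
  shows "(\<integral>\<^sup>+ s. G (fork_step fs v s) \<partial>step_input D)
    = (\<Sum>j<length fs. ennreal (fst (snd (fs ! j)))
        * (\<integral>\<^sup>+ r. G (case fs ! j of (d, p, u) \<Rightarrow> (d, u v r)) \<partial>sample_measure D))"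
proof -
  interpret S: prob_space "sample_measure D" by (rule prob_space_sample_measure)
  have "(\<lambda>s. fork_step fs v s) \<in> step_input D \<rightarrow>\<^sub>M state_space"
    using measurable_compose[OF measurable_Pair1'[of v val_space] measurable_fork_step[OF assms(1)]]
    by simp
  then have "(\<lambda>s. G (fork_step fs v s)) \<in> borel_measurable (step_input D)"
    by measurable
  then have "(\<integral>\<^sup>+ s. G (fork_step fs v s) \<partial>step_input D)
      = (\<integral>\<^sup>+ x. \<integral>\<^sup>+ r. G (fork_step fs v (x, r)) \<partial>sample_measure D \<partial>uniform_measure lborel {0..<1})"
    using S.nn_integral_fst[of "\<lambda>s. G (fork_step fs v s)"] by simp
  also have "\<dots> = (\<integral>\<^sup>+ x. (\<lambda>j. \<integral>\<^sup>+ r. G (case fs ! j of (d, p, u) \<Rightarrow> (d, u v r)) \<partial>sample_measure D)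
      (select_fork fs x) \<partial>uniform_measure lborel {0..<1})"
    by (simp add: fork_step_def)
  also have "\<dots> = (\<Sum>j<length fs. ennreal (fst (snd (fs ! j)))
        * (\<integral>\<^sup>+ r. G (case fs ! j of (d, p, u) \<Rightarrow> (d, u v r)) \<partial>sample_measure D))"
    by (rule nn_integral_select_fork[OF transition_valid_forks[OF assms(1)]])
  finally show ?thesis .
qed

section \<open>Iterates of the predicate transformer as expectations along runs\<close>

text \<open>Since enn2real sends an infinite integral to 0, this is meaningful only for bounded h.\<close>

definition run_expectation :: "nat \<Rightarrow> ('l \<times> ('v \<Rightarrow> real) \<Rightarrow> real) \<Rightarrow> 'l \<times> ('v \<Rightarrow> real) \<Rightarrow> real" where
  "run_expectation n h \<sigma> = enn2real (\<integral>\<^sup>+ \<omega>. ennreal (h (pts_run lt lf T \<sigma> \<omega> n)) \<partial>input_space D)"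

lemma measurable_run_expectation:
  assumes [measurable]: "h \<in> borel_measurable state_space"
  shows "run_expectation n h \<in> borel_measurable state_space"
proof -
  interpret P: prob_space "input_space D" by (rule prob_space_input_space)
  have "(\<lambda>(\<sigma>, \<omega>). ennreal (h (pts_run lt lf T \<sigma> \<omega> n))) \<in> borel_measurable (state_space \<Otimes>\<^sub>M input_space D)"
    using measurable_pts_run by measurable
  then show ?thesis
    unfolding run_expectation_def[abs_def] by measurable
qed

lemma pts_run_lf_not_lt:
  assumes "fst (pts_run lt lf T \<sigma> \<omega> k) = lf"
  shows "fst (pts_run lt lf T \<sigma> \<omega> n) \<noteq> lt"
proof
  assume n: "fst (pts_run lt lf T \<sigma> \<omega> n) = lt"
  show False
  proof (cases "k \<le> n")
    case True
    then show False using pts_run_absorbing[of lt lf T \<sigma> \<omega> k n] assms n lt_neq_lf by simp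
  next
    case False
    then show False using pts_run_absorbing[of lt lf T \<sigma> \<omega> n k] assms n lt_neq_lf by simp
  qed
qed

context
  fixes M :: real
  assumes one_le_M: "1 \<le> M"
begin

lemma nn_integral_pts_step:
  assumes "l \<notin> {lt, lf}" "G \<in> KM lt lf M" "G \<in> borel_measurable state_space"
  shows "(\<integral>\<^sup>+ s. ennreal (G (pts_step lt lf T (l, v) s)) \<partial>step_input D) = ennreal (ptf lt lf D T G (l, v))"
proof -
  define fs where "fs = enabled_forks T l v"
  obtain g where g: "(l, g, fs) \<in> T" using enabled_transition[OF assms(1)] unfolding fs_def by blast
  define H where "H j = (\<integral>\<^sup>+ r. ennreal (G (case fs ! j of (d, p, u) \<Rightarrow> (d, u v r))) \<partial>sample_measure D)" for j
  have H_le: "H j \<le> ennreal M" for j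
    unfolding H_def using assms(2)
    by (intro nn_integral_ennreal_le_const prob_space_sample_measure) (simp add: KM_bounds)
  have H: "ennreal (enn2real (H j)) = H j" for j
    using le_less_trans[OF H_le ennreal_less_top, of j] by (simp add: less_top)
  have "ptf lt lf D T G (l, v) = (\<Sum>j<length fs. fst (snd (fs ! j)) * enn2real (H j))"
    using assms(1) by (simp add: ptf_def fs_def H_def sum_list_sum_nth atLeast0LessThan case_prod_beta')
  then have "ennreal (ptf lt lf D T G (l, v)) = (\<Sum>j<length fs. ennreal (fst (snd (fs ! j)) * enn2real (H j)))"
    using valid_forks_prob_pos[OF transition_valid_forks[OF g]]
    by (simp only:) (intro sum_ennreal[symmetric], simp add: less_imp_le)
  also have "\<dots> = (\<Sum>j<length fs. ennreal (fst (snd (fs ! j))) * H j)"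
    using valid_forks_prob_pos[OF transition_valid_forks[OF g]]
    by (intro sum.cong refl) (simp add: ennreal_mult H less_imp_le)
  finally have "ennreal (ptf lt lf D T G (l, v)) = (\<Sum>j<length fs. ennreal (fst (snd (fs ! j))) * H j)" .
  then show ?thesis
    using nn_integral_fork_step[OF g, of "\<lambda>\<sigma>. ennreal (G \<sigma>)"] assms
    by (simp add: pts_step_nonterminal fs_def H_def)
qed

lemma nn_integral_run_le:
  "h \<in> KM lt lf M \<Longrightarrow> (\<integral>\<^sup>+ \<omega>. ennreal (h (pts_run lt lf T \<sigma> \<omega> n)) \<partial>input_space D) \<le> ennreal M"
  by (intro nn_integral_ennreal_le_const prob_space_input_space) (simp add: KM_bounds)

lemma ennreal_run_expectation:
  "h \<in> KM lt lf M \<Longrightarrow>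
    ennreal (run_expectation n h \<sigma>) = (\<integral>\<^sup>+ \<omega>. ennreal (h (pts_run lt lf T \<sigma> \<omega> n)) \<partial>input_space D)"
  using le_less_trans[OF nn_integral_run_le ennreal_less_top]
  by (simp add: run_expectation_def less_top)

lemma run_expectation_in_KM:
  assumes "h \<in> KM lt lf M"
  shows "run_expectation n h \<in> KM lt lf M"
proof -
  interpret P: prob_space "input_space D" by (rule prob_space_input_space)
  have "run_expectation n h \<sigma> \<le> M" for \<sigma>
    using nn_integral_run_le[OF assms] one_le_M
    unfolding run_expectation_def by (simp add: enn2real_leI)
  moreover have "run_expectation n h \<sigma> = h \<sigma>" if "fst \<sigma> \<in> {lt, lf}" for \<sigma>
    using that assms P.emeasure_space_1 by (simp add: run_expectation_def pts_run_terminal KM_bounds)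
  ultimately show ?thesis
    using assms by (simp add: KM_def run_expectation_def)
qed

lemma ptf_in_KM:
  assumes "f \<in> KM lt lf M"
  shows "ptf lt lf D T f \<in> KM lt lf M"
proof -
  have "0 \<le> ptf lt lf D T f (l, v) \<and> ptf lt lf D T f (l, v) \<le> M" for l v
  proof (cases "l \<in> {lt, lf}")
    case True
    then show ?thesis using one_le_M by (auto simp: ptf_def)
  next
    case False
    define fs where "fs = enabled_forks T l v"
    let ?E = "\<lambda>d u. enn2real (\<integral>\<^sup>+ r. ennreal (f (d, u v r)) \<partial>sample_measure D)"
    have E: "0 \<le> ?E d u \<and> ?E d u \<le> M" for d u
      using nn_integral_ennreal_le_const[OF prob_space_sample_measure, of "\<lambda>r. f (d, u v r)" M]
        assms one_le_M by (simp add: KM_bounds enn2real_leI)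
    have fs: "valid_forks fs" unfolding fs_def using False by (rule valid_enabled_forks)
    then have p: "0 < p" if "(d, p, u) \<in> set fs" for d p u
      using that by (auto simp: valid_forks_def)
    have "ptf lt lf D T f (l, v) = (\<Sum>(d, p, u) \<leftarrow> fs. p * ?E d u)"
      using False by (simp add: ptf_def fs_def)
    moreover have "0 \<le> (\<Sum>(d, p, u) \<leftarrow> fs. p * ?E d u)"
      by (intro sum_list_nonneg) (auto dest!: p intro!: mult_nonneg_nonneg)
    moreover have "(\<Sum>(d, p, u) \<leftarrow> fs. p * ?E d u) \<le> (\<Sum>(d, p, u) \<leftarrow> fs. p * M)"
      using E p by (intro sum_list_mono) (auto intro: mult_left_mono less_imp_le)
    moreover have "(\<Sum>(d, p, u) \<leftarrow> fs. p * M) = M"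
      using fs sum_list_mult_const[of "\<lambda>(d, p, u). p" M fs]
      by (simp add: valid_forks_def case_prod_beta')
    ultimately show ?thesis by linarith
  qed
  then show ?thesis
    using lt_neq_lf by (auto simp: KM_def ptf_def)
qed

lemma ptf_mono:
  assumes "f \<le> g" "g \<in> KM lt lf M"
  shows "ptf lt lf D T f \<le> ptf lt lf D T g"
proof (rule le_funI)
  fix \<sigma> :: "'l \<times> ('v \<Rightarrow> real)"
  obtain l v where \<sigma>: "\<sigma> = (l, v)" by (cases \<sigma>)
  show "ptf lt lf D T f \<sigma> \<le> ptf lt lf D T g \<sigma>"
  proof (cases "l \<in> {lt, lf}")
    case True
    then show ?thesis by (auto simp: \<sigma> ptf_def)
  next
    case False
    have "enn2real (\<integral>\<^sup>+ r. ennreal (f (d, u v r)) \<partial>sample_measure D)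
        \<le> enn2real (\<integral>\<^sup>+ r. ennreal (g (d, u v r)) \<partial>sample_measure D)" for d u
    proof (rule enn2real_mono)
      show "(\<integral>\<^sup>+ r. ennreal (f (d, u v r)) \<partial>sample_measure D) \<le> (\<integral>\<^sup>+ r. ennreal (g (d, u v r)) \<partial>sample_measure D)"
        using assms(1) by (intro nn_integral_mono ennreal_leI) (simp add: le_fun_def)
      show "(\<integral>\<^sup>+ r. ennreal (g (d, u v r)) \<partial>sample_measure D) < \<top>"
        using nn_integral_ennreal_le_const[OF prob_space_sample_measure, of "\<lambda>r. g (d, u v r)" M]
          assms(2) by (simp add: KM_bounds le_less_trans[OF _ ennreal_less_top])
    qed
    moreover have "0 < p" if "(d, p, u) \<in> set (enabled_forks T l v)" for d p u
      using valid_enabled_forks[OF False, of v] that by (auto simp: valid_forks_def)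
    ultimately show ?thesis
      using False unfolding \<sigma> ptf_def
      by (auto intro!: sum_list_mono mult_left_mono intro: less_imp_le)
  qed
qed

lemma run_expectation_Suc:
  assumes "h \<in> KM lt lf M" and [measurable]: "h \<in> borel_measurable state_space"
  shows "run_expectation (Suc n) h = ptf lt lf D T (run_expectation n h)"
proof
  fix \<sigma> :: "'l \<times> ('v \<Rightarrow> real)"
  obtain l v where \<sigma>: "\<sigma> = (l, v)" by (cases \<sigma>)
  have E: "run_expectation n h \<in> KM lt lf M"
    using run_expectation_in_KM[OF assms(1)] .
  show "run_expectation (Suc n) h \<sigma> = ptf lt lf D T (run_expectation n h) \<sigma>"
  proof (cases "l \<in> {lt, lf}")
    case True
    then show ?thesis
      using run_expectation_in_KM[OF assms(1), of "Suc n"] lt_neq_lf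
      by (auto simp: \<sigma> ptf_def KM_def)
  next
    case False
    have "(\<integral>\<^sup>+ \<omega>. ennreal (h (pts_run lt lf T \<sigma> \<omega> (Suc n))) \<partial>input_space D)
        = (\<integral>\<^sup>+ s. ennreal (run_expectation n h (pts_step lt lf T \<sigma> s)) \<partial>step_input D)"
      by (simp only: nn_integral_pts_run_Suc[OF measurable_compose[OF assms(2) measurable_ennreal]]
          ennreal_run_expectation[OF assms(1)])
    also have "\<dots> = ennreal (ptf lt lf D T (run_expectation n h) \<sigma>)"
      unfolding \<sigma> using False E measurable_run_expectation[OF assms(2)]
      by (rule nn_integral_pts_step)
    finally show ?thesis
      using KM_bounds[OF ptf_in_KM[OF E]] by (simp add: run_expectation_def)
  qed
qed

lemma run_expectation_eq_iterate:
  assumes "h \<in> KM lt lf M" "h \<in> borel_measurable state_space"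
  shows "run_expectation n h = (ptf lt lf D T ^^ n) h"
proof (induction n)
  case 0
  interpret P: prob_space "input_space D" by (rule prob_space_input_space)
  show ?case
    using assms(1) P.emeasure_space_1 by (auto simp: run_expectation_def KM_bounds)
next
  case (Suc n)
  then show ?case by (simp add: run_expectation_Suc[OF assms])
qed

lemma iterate_ptf_KM_bot:
  "(ptf lt lf D T ^^ n) (KM_bot lf) \<sigma> = \<P>(\<omega> in input_space D. fst (pts_run lt lf T \<sigma> \<omega> n) = lf)"
proof -
  let ?A = "{\<omega> \<in> space (input_space D). fst (pts_run lt lf T \<sigma> \<omega> n) = lf}"
  have [measurable]: "?A \<in> sets (input_space D)" by measurable
  have "(\<integral>\<^sup>+ \<omega>. ennreal (KM_bot lf (pts_run lt lf T \<sigma> \<omega> n)) \<partial>input_space D)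
      = (\<integral>\<^sup>+ \<omega>. indicator ?A \<omega> \<partial>input_space D)"
    by (intro nn_integral_cong) (simp add: KM_bot_def indicator_def)
  also have "\<dots> = emeasure (input_space D) ?A" by simp
  finally show ?thesis
    unfolding run_expectation_eq_iterate[OF KM_bot_in_KM[OF lt_neq_lf one_le_M] measurable_KM_bot, symmetric]
    by (simp add: run_expectation_def measure_def)
qed

lemma iterate_ptf_KM_top:
  "(ptf lt lf D T ^^ n) (KM_top lt lf M) \<sigma> = \<P>(\<omega> in input_space D. fst (pts_run lt lf T \<sigma> \<omega> n) = lf)
     + M * \<P>(\<omega> in input_space D. fst (pts_run lt lf T \<sigma> \<omega> n) \<notin> {lt, lf})"
proof -
  interpret P: prob_space "input_space D" by (rule prob_space_input_space)
  let ?A = "{\<omega> \<in> space (input_space D). fst (pts_run lt lf T \<sigma> \<omega> n) = lf}"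
  let ?B = "{\<omega> \<in> space (input_space D). fst (pts_run lt lf T \<sigma> \<omega> n) \<notin> {lt, lf}}"
  have [measurable]: "?A \<in> sets (input_space D)" "?B \<in> sets (input_space D)" by measurable
  have "(\<integral>\<^sup>+ \<omega>. ennreal (KM_top lt lf M (pts_run lt lf T \<sigma> \<omega> n)) \<partial>input_space D)
      = (\<integral>\<^sup>+ \<omega>. indicator ?A \<omega> + ennreal M * indicator ?B \<omega> \<partial>input_space D)"
    using lt_neq_lf by (intro nn_integral_cong) (auto simp: KM_top_def indicator_def)
  also have "\<dots> = emeasure (input_space D) ?A + ennreal M * emeasure (input_space D) ?B"
    by (simp add: nn_integral_add nn_integral_cmult_indicator)
  also have "\<dots> = ennreal (\<P>(\<omega> in input_space D. fst (pts_run lt lf T \<sigma> \<omega> n) = lf)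
     + M * \<P>(\<omega> in input_space D. fst (pts_run lt lf T \<sigma> \<omega> n) \<notin> {lt, lf}))"
    using one_le_M by (simp add: P.emeasure_eq_measure ennreal_mult ennreal_plus)
  finally show ?thesis
    unfolding run_expectation_eq_iterate[OF KM_top_in_KM[OF lt_neq_lf one_le_M] measurable_KM_top, symmetric]
    using one_le_M by (simp add: run_expectation_def del: ennreal_plus)
qed

lemma vpf_in_KM: "vpf lt lf D T \<in> KM lt lf M"
proof -
  interpret P: prob_space "input_space D" by (rule prob_space_input_space)
  have "0 \<le> vpf lt lf D T \<sigma> \<and> vpf lt lf D T \<sigma> \<le> M" for \<sigma>
    using one_le_M P.prob_le_1 unfolding vpf_def by (auto intro: order_trans)
  then show ?thesis
    using lt_neq_lf by (simp add: KM_def vpf_def pts_run_terminal P.prob_space)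
qed

lemma iterate_ptf_KM_bot_le_vpf: "(ptf lt lf D T ^^ n) (KM_bot lf) \<le> vpf lt lf D T"
proof (rule le_funI)
  interpret P: prob_space "input_space D" by (rule prob_space_input_space)
  fix \<sigma>
  have [measurable]: "{\<omega> \<in> space (input_space D). \<exists>k. fst (pts_run lt lf T \<sigma> \<omega> k) = lf} \<in> sets (input_space D)"
    by measurable
  show "(ptf lt lf D T ^^ n) (KM_bot lf) \<sigma> \<le> vpf lt lf D T \<sigma>"
    unfolding iterate_ptf_KM_bot vpf_def
    by (intro P.finite_measure_mono) auto
qed

lemma vpf_le_iterate_ptf_KM_top: "vpf lt lf D T \<le> (ptf lt lf D T ^^ n) (KM_top lt lf M)"
proof (rule le_funI)
  interpret P: prob_space "input_space D" by (rule prob_space_input_space)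
  fix \<sigma>
  let ?A = "{\<omega> \<in> space (input_space D). fst (pts_run lt lf T \<sigma> \<omega> n) = lf}"
  let ?B = "{\<omega> \<in> space (input_space D). fst (pts_run lt lf T \<sigma> \<omega> n) \<notin> {lt, lf}}"
  have [measurable]: "?A \<in> sets (input_space D)" "?B \<in> sets (input_space D)" by measurable
  have "{\<omega> \<in> space (input_space D). \<exists>k. fst (pts_run lt lf T \<sigma> \<omega> k) = lf} \<subseteq> ?A \<union> ?B"
  proof
    fix \<omega> assume "\<omega> \<in> {\<omega> \<in> space (input_space D). \<exists>k. fst (pts_run lt lf T \<sigma> \<omega> k) = lf}"
    then obtain k where "\<omega> \<in> space (input_space D)" "fst (pts_run lt lf T \<sigma> \<omega> k) = lf" by blast
    moreover from this(2) have "fst (pts_run lt lf T \<sigma> \<omega> n) \<noteq> lt" by (rule pts_run_lf_not_lt)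
    ultimately show "\<omega> \<in> ?A \<union> ?B" by auto
  qed
  then have "vpf lt lf D T \<sigma> \<le> P.prob (?A \<union> ?B)"
    unfolding vpf_def by (intro P.finite_measure_mono) auto
  also have "\<dots> \<le> P.prob ?A + P.prob ?B"
    by (rule measure_Un_le) auto
  also have "\<dots> \<le> P.prob ?A + M * P.prob ?B"
    using one_le_M by (simp add: mult_le_cancel_right1)
  finally show "vpf lt lf D T \<sigma> \<le> (ptf lt lf D T ^^ n) (KM_top lt lf M) \<sigma>"
    unfolding iterate_ptf_KM_top .
qed

lemma iterate_ptf_gap_tendsto_0:
  assumes "ast lt lf D T"
  shows "(\<lambda>n. (ptf lt lf D T ^^ n) (KM_top lt lf M) \<sigma> - (ptf lt lf D T ^^ n) (KM_bot lf) \<sigma>) \<longlonglongrightarrow> 0"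
proof -
  interpret P: prob_space "input_space D" by (rule prob_space_input_space)
  let ?B = "\<lambda>n. {\<omega> \<in> space (input_space D). fst (pts_run lt lf T \<sigma> \<omega> n) \<notin> {lt, lf}}"
  have [measurable]: "?B n \<in> sets (input_space D)" for n by measurable
  have "decseq ?B"
  proof (rule decseq_SucI)
    show "?B (Suc n) \<subseteq> ?B n" for n
      using pts_run_absorbing[of lt lf T \<sigma> _ n "Suc n"] by auto
  qed
  then have "(\<lambda>n. P.prob (?B n)) \<longlonglongrightarrow> P.prob (\<Inter>n. ?B n)"
    by (intro P.finite_Lim_measure_decseq) auto
  moreover have "P.prob (\<Inter>n. ?B n) = 0"
  proof -
    have "P.prob {\<omega> \<in> space (input_space D). \<exists>n. fst (pts_run lt lf T \<sigma> \<omega> n) \<in> {lt, lf}} = 1"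
      using assms unfolding ast_def by blast
    moreover have "(\<Inter>n. ?B n) = space (input_space D)
        - {\<omega> \<in> space (input_space D). \<exists>n. fst (pts_run lt lf T \<sigma> \<omega> n) \<in> {lt, lf}}"
      by auto
    ultimately show ?thesis
      using P.prob_compl[of "{\<omega> \<in> space (input_space D). \<exists>n. fst (pts_run lt lf T \<sigma> \<omega> n) \<in> {lt, lf}}"]
      by simp
  qed
  ultimately have "(\<lambda>n. M * P.prob (?B n)) \<longlonglongrightarrow> 0"
    by (simp add: tendsto_mult_right_zero)
  then show ?thesis
    by (simp add: iterate_ptf_KM_top iterate_ptf_KM_bot)
qed

end

end

theorem mainTheorem6:
  fixes lt lf :: "'l::finite" and D :: "'r::finite \<Rightarrow> real measure"
    and T :: "('l,'v::finite,'r) trans set" and M :: real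
  assumes "wf_pts lt lf D T"
    and "ast lt lf D T"
    and "1 \<le> M"
  shows "(\<exists>f. is_gfp_on (KM lt lf M) (ptf lt lf D T) f)
       \<and> (\<exists>g. is_lfp_on (KM lt lf M) (ptf lt lf D T) g)
       \<and> (\<forall>f g. is_gfp_on (KM lt lf M) (ptf lt lf D T) f
                \<longrightarrow> is_lfp_on (KM lt lf M) (ptf lt lf D T) g \<longrightarrow> f = g)
       \<and> vpf lt lf D T \<in> KM lt lf M
       \<and> ptf lt lf D T (vpf lt lf D T) = vpf lt lf D T
       \<and> (\<forall>f \<in> KM lt lf M. ptf lt lf D T f = f \<longrightarrow> f = vpf lt lf D T)"
proof -
  interpret pts lt lf D T by (rule pts.intro) (fact assms(1))
  note M = assms(3)
  note vpf_unique_fixed_point = unique_fixed_point_by_iteration[OF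
      ptf_mono[OF M] ptf_in_KM[OF M] KM_bot_le[where lt = lt and M = M]
      KM_top_in_KM[OF lt_neq_lf M] le_KM_top[where lt = lt and M = M]
      iterate_ptf_gap_tendsto_0[OF M assms(2)] vpf_in_KM[OF M]
      iterate_ptf_KM_bot_le_vpf[OF M] vpf_le_iterate_ptf_KM_top[OF M]]
  show ?thesis
    using vpf_in_KM[OF M] vpf_unique_fixed_point
      unique_fixed_point_is_gfp_and_lfp[where F = "ptf lt lf D T", OF vpf_in_KM[OF M] vpf_unique_fixed_point]
    by blast
qed

end
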